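(* There exist $\rho_0>0$ and $K_0\ge1$ (depending only on $R$) such that for every $\ell=\ell_{(a,b,c,d)}\in\mathcal{L}_{SL_2}$, the map $F_\ell:\mathcal{L}_{SL_2}\to\mathbb{R}^3$, $F_\ell(\ell_{(a',b',c',d')})=(A,B,C)$ with $$A=(c,d)\cdot(d',-c'),\quad B=(a,b,c,d)\cdot(d',-c',b',-a'),\quad C=(a,b)\cdot(b',-a'),$$ is bilipschitz on $\{\ell'\in\mathcal{L}_{SL_2}: d(\ell,\ell')<\rho_0\}$ with bilipschitz constant at most $K_0$.
   Context: For $(a,b,c,d)\in\mathbb{R}^4$ with $ad-bc=1$, $\ell_{(a,b,c,d)}=\{(a,b,0)+s(c,d,1):s\in\mathbb{R}\}$; $\mathcal{L}_{SL_2}$ is the set of such lines, each identified with its parameter $(a,b,c,d)\in\mathbb{R}^4$, and $d(\cdot,\cdot)$ is the Euclidean distance between parameters (bilipschitz is with respect to this distance). A number $R\ge1$ is fixed and only lines whose parameter lies in $B(0,R)\subset\mathbb{R}^4$ are considered (i.e. $\mathcal{L}_{SL_2}$ stands for $\mathcal{L}_{SL_2}\cap B(0,R)$). *)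

theory Defs
  imports "HOL-Analysis.Analysis"
begin

text \<open>Parameters (a,b,c,d) of lines in L_SL2; the product type carries the Euclidean
  metric of R^4 (dist on products is the l2-combination of component distances).\<close>
type_synonym param = "real \<times> real \<times> real \<times> real"

definition L_SL2 :: "real \<Rightarrow> param set" where
  "L_SL2 R = {(a,b,c,d). a*d - b*c = 1 \<and> norm (a,b,c,d) < R}"

definition Fmap :: "param \<Rightarrow> param \<Rightarrow> real \<times> real \<times> real" where
  "Fmap l l' = (case l of (a,b,c,d) \<Rightarrow> case l' of (a',b',c',d') \<Rightarrow>
     (c*d' - d*c', a*d' - b*c' + c*b' - d*a', a*b' - b*a'))"

definition bilipschitz_on :: "real \<Rightarrow> 'a::metric_space set \<Rightarrow> ('a \<Rightarrow> 'b::metric_space) \<Rightarrow> bool" where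
  "bilipschitz_on K S f \<longleftrightarrow>
     (\<forall>x\<in>S. \<forall>y\<in>S. dist x y / K \<le> dist (f x) (f y) \<and> dist (f x) (f y) \<le> K * dist x y)"

end

theory Submission
  imports Defs
begin

text \<open>
  Write l as the matrix L = [[a,b],[c,d]] and a displacement u as U = [[u1,u2],[u3,u4]].
  Since det L = 1, U = P L with P = U adj L = [[\<alpha>,\<beta>],[\<gamma>,\<delta>]], and F_l(u) = (-\<gamma>, \<delta> - \<alpha>, \<beta>)
  records every entry of P except its trace, which is the polarised determinant D(l,u).
  Hence |u| \<le> |l| (|F_l(u)| + |D(l,u)|). For u = x - y with det x = det y = 1 we have
  D(x + y, x - y) = 0, so D(l, x - y) = D(l - (x + y)/2, x - y) is of size at most \<rho>0 |x - y|,
  which is absorbed into the left-hand side once |l| \<rho>0 \<le> 1/2.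
  The upper bound is Cauchy-Schwarz, F_l(u) being bilinear in (l, u).
\<close>

definition det2 :: "param \<Rightarrow> real" where
  "det2 = (\<lambda>(a,b,c,d). a*d - b*c)"

definition polar_det :: "param \<Rightarrow> param \<Rightarrow> real" where
  "polar_det = (\<lambda>(a,b,c,d) (a',b',c',d'). a*d' + d*a' - b*c' - c*b')"

lemma L_SL2_iff: "l \<in> L_SL2 R \<longleftrightarrow> det2 l = 1 \<and> norm l < R"
  by (cases l) (auto simp: L_SL2_def det2_def)

lemma norm_param_sq: "(norm ((a,b,c,d) :: param))\<^sup>2 = a\<^sup>2 + b\<^sup>2 + c\<^sup>2 + d\<^sup>2"
  by (simp add: norm_prod_def)

lemma norm_triple_sq: "(norm ((a,b,c) :: real \<times> real \<times> real))\<^sup>2 = a\<^sup>2 + b\<^sup>2 + c\<^sup>2"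
  by (simp add: norm_prod_def)

lemma linear_Fmap: "linear (Fmap l)"
  by (rule linearI) (auto simp: Fmap_def algebra_simps split: prod.splits)

lemma sum_mult_sq_le: "(p*x + q*y)\<^sup>2 \<le> (p\<^sup>2 + q\<^sup>2) * (x\<^sup>2 + y\<^sup>2)" for p q x y :: real
  using Cauchy_Schwarz_ineq[of "(p,q)" "(x,y)"] by (simp add: power2_eq_square)

lemma abs_polar_det_le: "\<bar>polar_det v w\<bar> \<le> norm v * norm w"
proof -
  obtain a b c d a' b' c' d' where v: "v = (a,b,c,d)" and w: "w = (a',b',c',d')"
    by (cases v, cases w) auto
  have "polar_det v w = inner v (d',-c',-b',a')"
    by (simp add: v w polar_det_def)
  also have "\<bar>\<dots>\<bar> \<le> norm v * norm (d',-c',-b',a')"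
    by (rule Cauchy_Schwarz_ineq2)
  also have "norm (d',-c',-b',a') = norm w"
    by (simp add: w norm_prod_def add_ac)
  finally show ?thesis .
qed

lemma polar_det_diff:
  assumes "det2 x = det2 y"
  shows "polar_det l (x - y) = (polar_det (l - x) (x - y) + polar_det (l - y) (x - y)) / 2"
  using assms by (cases l, cases x, cases y) (auto simp: polar_det_def det2_def algebra_simps)

lemma norm_Fmap_le: "norm (Fmap l u) \<le> sqrt 2 * norm l * norm u"
proof -
  obtain a b c d u1 u2 u3 u4 where l: "l = (a,b,c,d)" and u: "u = (u1,u2,u3,u4)"
    by (cases l, cases u) auto
  have A: "(c*u4 - d*u3)\<^sup>2 \<le> (c\<^sup>2 + d\<^sup>2) * (u3\<^sup>2 + u4\<^sup>2)"
    using sum_mult_sq_le[of c u4 d "-u3"] by (simp add: algebra_simps)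
  have C: "(a*u2 - b*u1)\<^sup>2 \<le> (a\<^sup>2 + b\<^sup>2) * (u1\<^sup>2 + u2\<^sup>2)"
    using sum_mult_sq_le[of a u2 b "-u1"] by (simp add: algebra_simps)
  have "(c\<^sup>2 + d\<^sup>2) * (u3\<^sup>2 + u4\<^sup>2) + (a\<^sup>2 + b\<^sup>2) * (u1\<^sup>2 + u2\<^sup>2) \<le> (norm l * norm u)\<^sup>2"
    by (simp add: l u norm_param_sq power_mult_distrib algebra_simps)
  with A C have "(c*u4 - d*u3)\<^sup>2 + (a*u2 - b*u1)\<^sup>2 \<le> (norm l * norm u)\<^sup>2"
    by linarith
  moreover have "(a*u4 - b*u3 + c*u2 - d*u1)\<^sup>2 \<le> (norm l * norm u)\<^sup>2"
  proof -
    have "\<bar>a*u4 - b*u3 + c*u2 - d*u1\<bar> \<le> norm l * norm (u4,-u3,u2,-u1)"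
      using Cauchy_Schwarz_ineq2[of l "(u4,-u3,u2,-u1)"] by (simp add: l)
    also have "norm (u4,-u3,u2,-u1) = norm u"
      by (simp add: u norm_prod_def add_ac)
    finally show ?thesis
      by (metis abs_ge_zero power2_abs power_mono)
  qed
  ultimately have "(norm (Fmap l u))\<^sup>2 \<le> (sqrt 2 * norm l * norm u)\<^sup>2"
    by (simp add: l u Fmap_def norm_triple_sq power_mult_distrib)
  then show ?thesis by (rule power2_le_imp_le) simp
qed

lemma norm_le_norm_Fmap_polar_det:
  assumes "det2 l = 1"
  shows "norm u \<le> norm l * (norm (Fmap l u) + \<bar>polar_det l u\<bar>)"
proof -
  obtain a b c d u1 u2 u3 u4 where l: "l = (a,b,c,d)" and u: "u = (u1,u2,u3,u4)"
    by (cases l, cases u) auto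
  have det: "a*d - b*c = 1"
    using assms by (simp add: l det2_def)
  define \<alpha> \<beta> \<gamma> \<delta> where "\<alpha> = u1*d - u2*c" and "\<beta> = a*u2 - b*u1"
    and "\<gamma> = u3*d - u4*c" and "\<delta> = a*u4 - b*u3"
  have "\<alpha>*a + \<beta>*c = u1*(a*d - b*c)" "\<alpha>*b + \<beta>*d = u2*(a*d - b*c)"
    "\<gamma>*a + \<delta>*c = u3*(a*d - b*c)" "\<gamma>*b + \<delta>*d = u4*(a*d - b*c)"
    unfolding \<alpha>_def \<beta>_def \<gamma>_def \<delta>_def by algebra+
  then have u_eq: "\<alpha>*a + \<beta>*c = u1" "\<alpha>*b + \<beta>*d = u2" "\<gamma>*a + \<delta>*c = u3" "\<gamma>*b + \<delta>*d = u4"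
    using det by simp_all
  have F: "Fmap l u = (-\<gamma>, \<delta> - \<alpha>, \<beta>)" and D: "polar_det l u = \<alpha> + \<delta>"
    by (simp_all add: l u Fmap_def polar_det_def \<alpha>_def \<beta>_def \<gamma>_def \<delta>_def)
  have PD: "\<alpha>\<^sup>2 + \<beta>\<^sup>2 + \<gamma>\<^sup>2 + \<delta>\<^sup>2 \<le> (norm (Fmap l u) + \<bar>polar_det l u\<bar>)\<^sup>2"
  proof -
    have "(\<delta> - \<alpha>)\<^sup>2 + (\<alpha> + \<delta>)\<^sup>2 = 2*\<alpha>\<^sup>2 + 2*\<delta>\<^sup>2"
      by algebra
    then have "\<alpha>\<^sup>2 + \<beta>\<^sup>2 + \<gamma>\<^sup>2 + \<delta>\<^sup>2 \<le> (norm (Fmap l u))\<^sup>2 + (polar_det l u)\<^sup>2"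
      unfolding F D norm_triple_sq using zero_le_power2[of \<alpha>] zero_le_power2[of \<delta>] by simp
    also have "\<dots> \<le> (norm (Fmap l u) + \<bar>polar_det l u\<bar>)\<^sup>2"
      by (simp add: power2_sum)
    finally show ?thesis .
  qed
  have "(norm u)\<^sup>2 \<le> (\<alpha>\<^sup>2 + \<beta>\<^sup>2) * (a\<^sup>2 + c\<^sup>2) + (\<alpha>\<^sup>2 + \<beta>\<^sup>2) * (b\<^sup>2 + d\<^sup>2)
      + (\<gamma>\<^sup>2 + \<delta>\<^sup>2) * (a\<^sup>2 + c\<^sup>2) + (\<gamma>\<^sup>2 + \<delta>\<^sup>2) * (b\<^sup>2 + d\<^sup>2)"
    using sum_mult_sq_le[of \<alpha> a \<beta> c] sum_mult_sq_le[of \<alpha> b \<beta> d]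
      sum_mult_sq_le[of \<gamma> a \<delta> c] sum_mult_sq_le[of \<gamma> b \<delta> d]
    by (simp add: u norm_param_sq u_eq)
  also have "\<dots> = (\<alpha>\<^sup>2 + \<beta>\<^sup>2 + \<gamma>\<^sup>2 + \<delta>\<^sup>2) * (norm l)\<^sup>2"
    by (simp add: l norm_param_sq algebra_simps)
  also have "\<dots> \<le> (norm (Fmap l u) + \<bar>polar_det l u\<bar>)\<^sup>2 * (norm l)\<^sup>2"
    using PD by (rule mult_right_mono) simp
  finally have "(norm u)\<^sup>2 \<le> (norm l * (norm (Fmap l u) + \<bar>polar_det l u\<bar>))\<^sup>2"
    by (simp add: power_mult_distrib mult.commute)
  then show ?thesis by (rule power2_le_imp_le) simp
qed

lemma norm_diff_le_norm_Fmap: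
  assumes "det2 l = 1" "det2 x = 1" "det2 y = 1"
    and "dist l x \<le> r" "dist l y \<le> r" "norm l * r \<le> 1/2"
  shows "norm (x - y) \<le> 2 * norm l * norm (Fmap l (x - y))"
proof -
  have "\<bar>polar_det l (x - y)\<bar> \<le> (norm (l - x) * norm (x - y) + norm (l - y) * norm (x - y)) / 2"
    using polar_det_diff[of x y l] abs_polar_det_le[of "l - x" "x - y"]
      abs_polar_det_le[of "l - y" "x - y"] assms(2,3) by simp
  also have "\<dots> \<le> r * norm (x - y)"
    using mult_right_mono[OF assms(4), of "norm (x - y)"] mult_right_mono[OF assms(5), of "norm (x - y)"]
    by (simp add: dist_norm)
  finally have polar_small: "\<bar>polar_det l (x - y)\<bar> \<le> r * norm (x - y)" .
  have "norm (x - y) \<le> norm l * (norm (Fmap l (x - y)) + \<bar>polar_det l (x - y)\<bar>)"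
    using assms(1) by (rule norm_le_norm_Fmap_polar_det)
  also have "\<dots> \<le> norm l * (norm (Fmap l (x - y)) + r * norm (x - y))"
    using polar_small by (intro mult_left_mono) simp_all
  also have "\<dots> \<le> norm l * norm (Fmap l (x - y)) + norm (x - y) / 2"
    using mult_right_mono[OF assms(6), of "norm (x - y)"] by (simp add: algebra_simps)
  finally show ?thesis by simp
qed

lemma bilipschitz_on_Fmap:
  assumes l: "det2 l = 1" "norm l \<le> R"
    and S: "S \<subseteq> {l'. det2 l' = 1 \<and> dist l l' < 1 / (2*R)}"
  shows "bilipschitz_on (2*R) S (Fmap l)"
  unfolding bilipschitz_on_def
proof (intro ballI conjI)
  fix x y assume "x \<in> S" "y \<in> S"
  with S have "dist l x < 1 / (2*R)"
    by auto
  then have "0 < 1 / (2*R)"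
    by (rule le_less_trans[OF zero_le_dist])
  then have "R > 0"
    by simp
  from \<open>x \<in> S\<close> \<open>y \<in> S\<close> S
  have xy: "det2 x = 1" "det2 y = 1" "dist l x \<le> 1 / (2*R)" "dist l y \<le> 1 / (2*R)"
    by auto
  have dist_Fmap: "dist (Fmap l x) (Fmap l y) = norm (Fmap l (x - y))"
    by (simp add: dist_norm linear_diff[OF linear_Fmap])
  have "norm l * (1 / (2*R)) \<le> 1/2"
    using l(2) \<open>R > 0\<close> by (simp add: field_simps)
  then have "norm (x - y) \<le> 2 * norm l * norm (Fmap l (x - y))"
    by (rule norm_diff_le_norm_Fmap[OF l(1) xy])
  also have "\<dots> \<le> 2 * R * norm (Fmap l (x - y))"
    using l(2) by (simp add: mult_right_mono)
  finally show "dist x y / (2*R) \<le> dist (Fmap l x) (Fmap l y)"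
    unfolding dist_Fmap using \<open>R > 0\<close> by (simp add: dist_norm field_simps)
  have "norm (Fmap l (x - y)) \<le> sqrt 2 * norm l * norm (x - y)"
    by (rule norm_Fmap_le)
  also have "\<dots> \<le> 2 * R * norm (x - y)"
    using l(2) sqrt2_less_2 by (intro mult_right_mono mult_mono) simp_all
  finally show "dist (Fmap l x) (Fmap l y) \<le> 2*R * dist x y"
    unfolding dist_Fmap by (simp add: dist_norm)
qed

theorem lemma2p5:
  fixes R :: real
  assumes "R \<ge> 1"
  shows "\<exists>\<rho>0 K0. \<rho>0 > 0 \<and> K0 \<ge> 1 \<and>
    (\<forall>l\<in>L_SL2 R. bilipschitz_on K0 {l'\<in>L_SL2 R. dist l l' < \<rho>0} (Fmap l))"
proof (intro exI conjI ballI)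
  show "1 / (2*R) > 0" and "2*R \<ge> 1"
    using assms by simp_all
  fix l assume "l \<in> L_SL2 R"
  then have "det2 l = 1" "norm l \<le> R"
    by (simp_all add: L_SL2_iff)
  then show "bilipschitz_on (2*R) {l'\<in>L_SL2 R. dist l l' < 1 / (2*R)} (Fmap l)"
    by (rule bilipschitz_on_Fmap) (auto simp: L_SL2_iff)
qed

end
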